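(* Let $\mathcal{S}$ be a state space and let $\mathsf{M}^{(1)},\mathsf{M}^{(2)}$ be dichotomic measurements on $\mathcal{S}$ with outcomes $\{+,-\}$. Then $\bar P(\mathsf{M}^{(1)},\mathsf{M}^{(2)})=1$ if and only if there exist four states $s_1,s_2,s_3,s_4\in\mathcal{S}$ such that $\mathsf{M}^{(1)}$ discriminates $\{s_1,s_2\}$ and $\{s_3,s_4\}$ and $\mathsf{M}^{(2)}$ discriminates $\{s_1,s_4\}$ and $\{s_2,s_3\}$.
   Context: General probabilistic theory setting: a state space $\mathcal{S}$ is a compact convex subset of a finite-dimensional real vector space, embedded as a base of a closed generating proper cone in a vector space $V$, with unit effect $u$. Effects are linear functionals $e$ on $V$ with $0\le e\le1$ on $\mathcal{S}$; $\|f\|=\max_{s\in\mathcal{S}}|f(s)|$. A dichotomic measurement is a pair of effects $\mathsf{M}_+,\mathsf{M}_-$ with $\mathsf{M}_++\mathsf{M}_-=u$. For dichotomic $\mathsf{M}^{(1)},\mathsf{M}^{(2)}$, $\bar P(\mathsf{M}^{(1)},\mathsf{M}^{(2)})=\frac18\sum_{x,y\in\{+,-\}}\|\mathsf{M}^{(1)}_x+\mathsf{M}^{(2)}_y\|$. A dichotomic measurement $\mathsf{M}$ discriminates sets of states $S_+,S_-\subseteq\mathcal{S}$ if $\mathsf{M}_+(s)=1$ for all $s\in S_+$ and $\mathsf{M}_+(s)=0$ for all $s\in S_-$. *)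

theory Defs
  imports "HOL-Analysis.Analysis"
begin

text \<open>A state space: a nonempty compact convex set S in a finite-dimensional real
vector space V (type 'a), which is a base of the cone it generates: there is a linear
functional u (the unit effect) equal to 1 on S, and S spans V (generating cone).
Closedness and properness of the generated cone follow from compactness and u = 1 on S.\<close>
definition state_space :: "'a::euclidean_space set \<Rightarrow> ('a \<Rightarrow> real) \<Rightarrow> bool" where
  "state_space S u \<longleftrightarrow> compact S \<and> convex S \<and> S \<noteq> {} \<and> linear u \<and>
     (\<forall>s\<in>S. u s = 1) \<and> span S = UNIV"

definition is_effect :: "'a::euclidean_space set \<Rightarrow> ('a \<Rightarrow> real) \<Rightarrow> bool" where
  "is_effect S e \<longleftrightarrow> linear e \<and> (\<forall>s\<in>S. 0 \<le> e s \<and> e s \<le> 1)"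

definition dichotomic :: "'a::euclidean_space set \<Rightarrow> ('a \<Rightarrow> real) \<Rightarrow> ('a \<Rightarrow> real) \<Rightarrow> ('a \<Rightarrow> real) \<Rightarrow> bool" where
  "dichotomic S u Mp Mm \<longleftrightarrow> is_effect S Mp \<and> is_effect S Mm \<and> (\<forall>v. Mp v + Mm v = u v)"

text \<open>\<parallel>f\<parallel> = max over S of |f s| (the max is attained since S is compact).\<close>
definition gpt_norm :: "'a set \<Rightarrow> ('a \<Rightarrow> real) \<Rightarrow> real" where
  "gpt_norm S f = (SUP s\<in>S. \<bar>f s\<bar>)"

definition Pbar :: "'a set \<Rightarrow> ('a \<Rightarrow> real) \<times> ('a \<Rightarrow> real) \<Rightarrow> ('a \<Rightarrow> real) \<times> ('a \<Rightarrow> real) \<Rightarrow> real" where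
  "Pbar S M1 M2 = (1/8) *
     (gpt_norm S (\<lambda>v. fst M1 v + fst M2 v) + gpt_norm S (\<lambda>v. fst M1 v + snd M2 v) +
      gpt_norm S (\<lambda>v. snd M1 v + fst M2 v) + gpt_norm S (\<lambda>v. snd M1 v + snd M2 v))"

definition discriminates :: "('a \<Rightarrow> real) \<times> ('a \<Rightarrow> real) \<Rightarrow> 'a set \<Rightarrow> 'a set \<Rightarrow> bool" where
  "discriminates M Sp Sm \<longleftrightarrow> (\<forall>s\<in>Sp. fst M s = 1) \<and> (\<forall>s\<in>Sm. fst M s = 0)"

end

theory Submission
  imports Defs
begin

text \<open>The norm of a sum of two effects is at most 2, with equality exactly when some state
makes both effects 1 (the maximum being attained on the compact state space). Hence
\<open>Pbar = 1\<close> says that each of the four outcome pairs occurs with certainty on some state;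
since \<open>M\<^sub>- = 1 - M\<^sub>+\<close> on states, these four states are the required
\<open>s\<^sub>1, \<dots>, s\<^sub>4\<close>.\<close>

lemma gpt_norm_le:
  assumes "S \<noteq> {}" and "\<forall>s\<in>S. \<bar>f s\<bar> \<le> c"
  shows "gpt_norm S f \<le> c"
  unfolding gpt_norm_def using assms by (intro cSUP_least) auto

lemma abs_le_gpt_norm:
  assumes "s \<in> S" and "bdd_above ((\<lambda>s. \<bar>f s\<bar>) ` S)"
  shows "\<bar>f s\<bar> \<le> gpt_norm S f"
  unfolding gpt_norm_def using assms by (rule cSUP_upper)

lemma gpt_norm_attained:
  assumes "compact S" and "S \<noteq> {}" and "continuous_on S f"
  obtains s where "s \<in> S" and "gpt_norm S f = \<bar>f s\<bar>"
proof -
  have "continuous_on S (\<lambda>s. \<bar>f s\<bar>)"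
    using assms(3) by (intro continuous_intros)
  then obtain s where s: "s \<in> S" "\<forall>t\<in>S. \<bar>f t\<bar> \<le> \<bar>f s\<bar>"
    using continuous_attains_sup[OF assms(1,2)] by blast
  then have "gpt_norm S f = \<bar>f s\<bar>"
    unfolding gpt_norm_def by (intro cSup_eq_maximum) auto
  with s(1) show thesis by (rule that)
qed

lemma gpt_norm_add_effects_le:
  assumes "S \<noteq> {}" and "is_effect S f" and "is_effect S g"
  shows "gpt_norm S (\<lambda>v. f v + g v) \<le> 2"
  using assms unfolding is_effect_def by (intro gpt_norm_le) force+

lemma gpt_norm_add_effects_eq_2_iff:
  fixes f g :: "'a::euclidean_space \<Rightarrow> real"
  assumes "compact S" and "S \<noteq> {}" and f: "is_effect S f" and g: "is_effect S g"
  shows "gpt_norm S (\<lambda>v. f v + g v) = 2 \<longleftrightarrow> (\<exists>s\<in>S. f s = 1 \<and> g s = 1)"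
proof
  assume norm: "gpt_norm S (\<lambda>v. f v + g v) = 2"
  have "linear (\<lambda>v. f v + g v)"
    using f g by (intro linear_compose_add) (auto simp: is_effect_def)
  then have "continuous_on S (\<lambda>v. f v + g v)"
    by (simp add: linear_continuous_on linear_conv_bounded_linear)
  then obtain s where "s \<in> S" "gpt_norm S (\<lambda>v. f v + g v) = \<bar>f s + g s\<bar>"
    using gpt_norm_attained assms(1,2) by blast
  with norm f g show "\<exists>s\<in>S. f s = 1 \<and> g s = 1"
    unfolding is_effect_def by force
next
  assume "\<exists>s\<in>S. f s = 1 \<and> g s = 1"
  then obtain s where s: "s \<in> S" "f s = 1" "g s = 1" by blast
  have "bdd_above ((\<lambda>s. \<bar>f s + g s\<bar>) ` S)"
    using f g by (intro bdd_aboveI2[where M = 2]) (force simp: is_effect_def)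
  then have "2 \<le> gpt_norm S (\<lambda>v. f v + g v)"
    using abs_le_gpt_norm[OF s(1)] s(2,3) by fastforce
  with gpt_norm_add_effects_le[OF assms(2) f g] show "gpt_norm S (\<lambda>v. f v + g v) = 2"
    by linarith
qed

lemma Pbar_eq_1_iff:
  fixes S :: "'a::euclidean_space set"
  assumes "compact S" and "S \<noteq> {}"
    and "is_effect S M1p" "is_effect S M1m" "is_effect S M2p" "is_effect S M2m"
  shows "Pbar S (M1p, M1m) (M2p, M2m) = 1 \<longleftrightarrow>
    (\<exists>s\<in>S. M1p s = 1 \<and> M2p s = 1) \<and> (\<exists>s\<in>S. M1p s = 1 \<and> M2m s = 1) \<and>
    (\<exists>s\<in>S. M1m s = 1 \<and> M2p s = 1) \<and> (\<exists>s\<in>S. M1m s = 1 \<and> M2m s = 1)"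
proof -
  note le = gpt_norm_add_effects_le[OF assms(2)]
  note eq_2_iff = gpt_norm_add_effects_eq_2_iff[OF assms(1,2)]
  have "Pbar S (M1p, M1m) (M2p, M2m) = 1 \<longleftrightarrow>
     gpt_norm S (\<lambda>v. M1p v + M2p v) = 2 \<and> gpt_norm S (\<lambda>v. M1p v + M2m v) = 2 \<and>
     gpt_norm S (\<lambda>v. M1m v + M2p v) = 2 \<and> gpt_norm S (\<lambda>v. M1m v + M2m v) = 2"
    using le[of M1p M2p] le[of M1p M2m] le[of M1m M2p] le[of M1m M2m] assms(3-)
    unfolding Pbar_def by auto
  then show ?thesis
    using assms(3-) by (simp add: eq_2_iff)
qed

lemma dichotomic_minus_eq_1_iff:
  assumes "state_space S u" and "dichotomic S u Mp Mm" and "s \<in> S"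
  shows "Mm s = 1 \<longleftrightarrow> Mp s = 0"
proof -
  have "Mp s + Mm s = u s" and "u s = 1"
    using assms unfolding dichotomic_def state_space_def by auto
  then show ?thesis by linarith
qed

theorem proposition6:
  fixes S :: "'a::euclidean_space set" and u :: "'a \<Rightarrow> real"
    and M1p M1m M2p M2m :: "'a \<Rightarrow> real"
  assumes "state_space S u"
    and "dichotomic S u M1p M1m"
    and "dichotomic S u M2p M2m"
  shows "Pbar S (M1p, M1m) (M2p, M2m) = 1 \<longleftrightarrow>
    (\<exists>s1\<in>S. \<exists>s2\<in>S. \<exists>s3\<in>S. \<exists>s4\<in>S.
       discriminates (M1p, M1m) {s1, s2} {s3, s4} \<and>
       discriminates (M2p, M2m) {s1, s4} {s2, s3})"
proof -
  have "compact S" "S \<noteq> {}"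
    using assms(1) unfolding state_space_def by auto
  moreover have "is_effect S M1p" "is_effect S M1m" "is_effect S M2p" "is_effect S M2m"
    using assms(2,3) unfolding dichotomic_def by auto
  ultimately have "Pbar S (M1p, M1m) (M2p, M2m) = 1 \<longleftrightarrow>
    (\<exists>s\<in>S. M1p s = 1 \<and> M2p s = 1) \<and> (\<exists>s\<in>S. M1p s = 1 \<and> M2p s = 0) \<and>
    (\<exists>s\<in>S. M1p s = 0 \<and> M2p s = 1) \<and> (\<exists>s\<in>S. M1p s = 0 \<and> M2p s = 0)"
    using dichotomic_minus_eq_1_iff[OF assms(1,2)] dichotomic_minus_eq_1_iff[OF assms(1,3)]
    by (simp add: Pbar_eq_1_iff cong: bex_cong)
  then show ?thesis
    unfolding discriminates_def by auto
qed

end
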